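(* Let $q$ be a prime power, $n\ge 1$, and $1\le k\le n(q-1)$. Then $C_{n,k}^q$ is self-dual (i.e. $C_{n,k}^q=(C_{n,k}^q)^\perp$) if and only if $q$ and $n$ are both odd and $k=\frac{n(q-1)}{2}$.
   Context: For a prime power $q$ and integers $n\ge 1$, $k\ge 0$, the projective Reed-Muller code $C_{n,k}^q\subseteq \mathbb{F}_q^N$, $N=\frac{q^{n+1}-1}{q-1}$, is defined as follows. For each point of $\mathbb{P}^n(\mathbb{F}_q)$ choose the affine representative $(p_0,\dots,p_n)\in\mathbb{F}_q^{n+1}\setminus\{0\}$ whose left-most nonzero coordinate equals $1$, and fix an ordering $P_1',\dots,P_N'$ of these representatives. Then $C_{n,k}^q=\{(F(P_1'),\dots,F(P_N')) : F\in \mathbb{F}_q[x_0,\dots,x_n]_k\}$, where $\mathbb{F}_q[x_0,\dots,x_n]_k$ is the space of homogeneous polynomials of degree $k$ together with $0$. Duals are taken with respect to the standard dot product on $\mathbb{F}_q^N$. *)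

theory Defs
  imports Main
begin

definition hom_monos :: "nat \<Rightarrow> nat \<Rightarrow> (nat \<Rightarrow> nat) set" where
  "hom_monos n k = {e. (\<forall>i>n. e i = 0) \<and> (\<Sum>i\<le>n. e i) = k}"

definition hom_eval :: "nat \<Rightarrow> nat \<Rightarrow> ((nat \<Rightarrow> nat) \<Rightarrow> 'a::field) \<Rightarrow> (nat \<Rightarrow> 'a) \<Rightarrow> 'a" where
  "hom_eval n k c x = (\<Sum>e\<in>hom_monos n k. c e * (\<Prod>i\<le>n. x i ^ e i))"

(* Normalized representatives of points of P^n(F_q): left-most nonzero coordinate is 1. *)
definition proj_points :: "nat \<Rightarrow> (nat \<Rightarrow> 'a::field) set" where
  "proj_points n = {p. (\<forall>i>n. p i = 0) \<and> (\<exists>j\<le>n. p j = 1 \<and> (\<forall>i<j. p i = 0))}"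

(* Ambient space F_q^N: functions on the point set (zero outside). *)
definition ambient :: "nat \<Rightarrow> ((nat \<Rightarrow> 'a::field) \<Rightarrow> 'a) set" where
  "ambient n = {v. \<forall>P. P \<notin> proj_points n \<longrightarrow> v P = 0}"

definition proj_RM :: "nat \<Rightarrow> nat \<Rightarrow> ((nat \<Rightarrow> 'a::field) \<Rightarrow> 'a) set" where
  "proj_RM n k = (\<lambda>c. \<lambda>P. if P \<in> proj_points n then hom_eval n k c P else 0) ` UNIV"

definition dot :: "nat \<Rightarrow> ((nat \<Rightarrow> 'a::field) \<Rightarrow> 'a) \<Rightarrow> ((nat \<Rightarrow> 'a) \<Rightarrow> 'a) \<Rightarrow> 'a" where
  "dot n u v = (\<Sum>P\<in>proj_points n. u P * v P)"

definition dual_code :: "nat \<Rightarrow> ((nat \<Rightarrow> 'a::field) \<Rightarrow> 'a) set \<Rightarrow> ((nat \<Rightarrow> 'a) \<Rightarrow> 'a) set" where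
  "dual_code n C = {v \<in> ambient n. \<forall>c\<in>C. dot n v c = 0}"

end

theory Submission
  imports Defs "HOL-Library.Cardinality" "HOL-Library.FuncSet" "HOL-Computational_Algebra.Polynomial"
begin

(*
  Write q = Q + 1.  Summing a monomial over the normalized points of P^n gives products of power
  sums  sum_a a^m  over F_q, which equal -1 or 0 according as Q divides m > 0 or not; hence a form
  of degree d sums to 0 over the points whenever Q divides d and 0 < d <= nQ.  So C is
  self-orthogonal when 2k = nQ.  Conversely, if C is self-dual then every monomial of degree d
  with d = k, or with d + k a positive multiple of Q at most nQ, lies in C and so must be
  self-orthogonal; unless q and n are odd and 2k = nQ, one of  x_n^k,  1  and
  x_0^f (x_1 ... x_n)^(Q/2)  is not.
  For sufficiency, forms of degree k interpolate arbitrary values, by Newton interpolation chart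
  by chart, on a set S of points built from grids  alpha(s_1), ..., alpha(s_d)  with parts
  s_i <= Q summing to less than k.  A counting identity for such bounded compositions shows that
  S contains exactly half of the points, so |C| >= q^|S| >= |C^perp|.
*)

section \<open>Power sums over a finite field\<close>

lemma of_nat_CARD_field [simp]: "(of_nat CARD('a) :: 'a::{finite,field}) = 0"
proof -
  have "(\<Sum>a::'a\<in>UNIV. a + 1) = (\<Sum>a\<in>UNIV. a)"
    by (rule sum.reindex_bij_witness[of _ "\<lambda>a. a - 1" "\<lambda>a. a + 1"]) auto
  then show ?thesis
    by (simp add: sum.distrib)
qed

lemma CARD_field_ge_2: "CARD('a::{finite,field}) \<ge> 2"
proof -
  have "card {0::'a, 1} \<le> CARD('a)"
    by (rule card_mono) auto
  then show ?thesis
    by simp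
qed

lemma field_power_CARD_minus_1:
  fixes b :: "'a::{finite,field}"
  assumes "b \<noteq> 0"
  shows "b ^ (CARD('a) - 1) = 1"
proof -
  let ?U = "UNIV - {0::'a}"
  have "(\<Prod>a\<in>?U. b * a) = (\<Prod>a\<in>?U. a)"
    by (rule prod.reindex_bij_witness[of _ "\<lambda>a. a / b" "\<lambda>a. b * a"]) (use assms in auto)
  then have "b ^ card ?U * (\<Prod>a\<in>?U. a) = (\<Prod>a\<in>?U. a)"
    by (simp add: prod.distrib)
  then show ?thesis
    by (simp add: card_Diff_singleton)
qed

lemma field_power_eq_1_if_dvd:
  fixes b :: "'a::{finite,field}"
  assumes "b \<noteq> 0" "(CARD('a) - 1) dvd m"
  shows "b ^ m = 1"
  using assms field_power_CARD_minus_1[OF assms(1)] by (auto simp: power_mult)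

text \<open>
  This avoids the cyclicity of the unit group: otherwise every unit would satisfy
  \<open>b ^ gcd m (q - 1) = 1\<close>, a polynomial equation of degree less than \<open>q - 1\<close>.
\<close>
lemma exists_field_power_ne_1:
  assumes "\<not> (CARD('a::{finite,field}) - 1) dvd m"
  shows "\<exists>b::'a. b \<noteq> 0 \<and> b ^ m \<noteq> 1"
proof (rule ccontr)
  let ?Q = "CARD('a) - 1"
  assume "\<not> ?thesis"
  then have all: "b ^ m = 1" if "b \<noteq> 0" for b :: 'a
    using that by blast
  have "m \<noteq> 0"
    using assms by (metis dvd_0_right)
  define g where "g = gcd m ?Q"
  obtain x y where xy: "m * x = ?Q * y + g"
    using bezout_nat[OF \<open>m \<noteq> 0\<close>] unfolding g_def by blast
  have roots: "b ^ g = 1" if "b \<noteq> 0" for b :: 'a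
  proof -
    have "1 = (b ^ m) ^ x"
      using all[OF that] by simp
    also have "\<dots> = (b ^ ?Q) ^ y * b ^ g"
      by (simp add: xy flip: power_mult power_add)
    finally show ?thesis
      using field_power_CARD_minus_1[OF that] by simp
  qed
  have "g > 0"
    using \<open>m \<noteq> 0\<close> unfolding g_def by simp
  have "g < ?Q"
  proof -
    have "?Q > 0"
      using CARD_field_ge_2[where 'a='a] by simp
    then have "g \<le> ?Q"
      unfolding g_def by (simp add: dvd_imp_le)
    moreover have "g \<noteq> ?Q"
      using assms unfolding g_def by (metis gcd_dvd1)
    ultimately show ?thesis by simp
  qed
  define p :: "'a poly" where "p = monom 1 g - 1"
  have poly_p: "poly p x = x ^ g - 1" for x
    unfolding p_def by (simp add: poly_monom)
  have "p \<noteq> 0"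
    using \<open>g > 0\<close> poly_p[of 0] by (auto simp: zero_power)
  have "card (UNIV - {0::'a}) \<le> card {x. poly p x = 0}"
    using roots poly_p by (intro card_mono poly_roots_finite[OF \<open>p \<noteq> 0\<close>]) auto
  also have "\<dots> \<le> degree p"
    by (rule card_poly_roots_bound[OF \<open>p \<noteq> 0\<close>])
  also have "\<dots> \<le> g"
    unfolding p_def by (rule degree_diff_le) (simp_all add: degree_monom_eq)
  finally show False
    using \<open>g < ?Q\<close> by (simp add: card_Diff_singleton)
qed

definition power_sum :: "nat \<Rightarrow> 'a::{finite,field}" where
  "power_sum m = (\<Sum>a\<in>UNIV. a ^ m)"

lemma power_sum_0 [simp]: "power_sum 0 = 0"
  by (simp add: power_sum_def)

lemma power_sum_dvd:
  assumes "m > 0" "(CARD('a::{finite,field}) - 1) dvd m"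
  shows "power_sum m = (-1 :: 'a)"
proof -
  have "power_sum m = (\<Sum>a\<in>UNIV - {0::'a}. a ^ m)"
    unfolding power_sum_def using \<open>m > 0\<close> by (subst sum.remove[of _ 0]) auto
  also have "\<dots> = of_nat (CARD('a) - 1)"
    using field_power_eq_1_if_dvd[OF _ assms(2)] by (simp add: card_Diff_singleton)
  also have "\<dots> = -1"
    using CARD_field_ge_2[where 'a='a] by simp
  finally show ?thesis .
qed

text \<open>The sum is invariant under \<open>a \<mapsto> b * a\<close>, which multiplies it by \<open>b ^ m \<noteq> 1\<close>.\<close>
lemma power_sum_not_dvd:
  assumes "\<not> (CARD('a::{finite,field}) - 1) dvd m"
  shows "power_sum m = (0 :: 'a)"
proof -
  obtain b :: 'a where b: "b \<noteq> 0" "b ^ m \<noteq> 1"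
    using exists_field_power_ne_1[OF assms] by blast
  have "power_sum m = (\<Sum>a\<in>UNIV. (b * a) ^ m)"
    unfolding power_sum_def
    by (rule sum.reindex_bij_witness[of _ "\<lambda>a. b * a" "\<lambda>a. a / b"]) (use b in auto)
  also have "\<dots> = b ^ m * power_sum m"
    unfolding power_sum_def by (simp add: power_mult_distrib sum_distrib_left)
  finally have "(1 - b ^ m) * power_sum m = 0"
    by (simp add: algebra_simps)
  then show ?thesis
    using b by simp
qed

section \<open>Homogeneous polynomial functions\<close>

definition monomial_fun :: "nat \<Rightarrow> (nat \<Rightarrow> nat) \<Rightarrow> (nat \<Rightarrow> 'a::field) \<Rightarrow> 'a" where
  "monomial_fun n e x = (\<Prod>i\<le>n. x i ^ e i)"

definition hom_poly_funs :: "nat \<Rightarrow> nat \<Rightarrow> ((nat \<Rightarrow> 'a::field) \<Rightarrow> 'a) set" where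
  "hom_poly_funs n k = range (hom_eval n k)"

lemma finite_funs_vanishing_beyond:
  assumes "finite A"
  shows "finite {e::nat \<Rightarrow> 'b::zero. (\<forall>i>n. e i = 0) \<and> (\<forall>i\<le>n. e i \<in> A)}"
    (is "finite ?E")
proof (rule finite_imageD)
  show "finite ((\<lambda>e. restrict e {..n}) ` ?E)"
  proof (rule finite_subset[OF image_subsetI finite_PiE[of "{..n}" "\<lambda>_. A"]])
    show "restrict e {..n} \<in> PiE {..n} (\<lambda>_. A)" if "e \<in> ?E" for e
      using that by (subst restrict_PiE_iff) auto
  qed (use assms in auto)
  show "inj_on (\<lambda>e. restrict e {..n}) ?E"
  proof (rule inj_onI, rule ext)
    fix e e' i
    assume "e \<in> ?E" "e' \<in> ?E" "restrict e {..n} = restrict e' {..n}"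
    then show "e i = e' i"
      by (cases "i \<le> n") (metis atMost_iff restrict_apply', simp)
  qed
qed

lemma hom_monos_le: "e \<in> hom_monos n k \<Longrightarrow> e i \<le> k"
  unfolding hom_monos_def by (cases "i \<le> n") (auto intro: member_le_sum[of i "{..n}" e, simplified])

lemma finite_hom_monos: "finite (hom_monos n k)"
  by (rule finite_subset[OF _ finite_funs_vanishing_beyond[of "{..k}" n]])
     (auto simp: hom_monos_def intro: hom_monos_le)

lemma hom_monos_add:
  "e \<in> hom_monos n a \<Longrightarrow> f \<in> hom_monos n b \<Longrightarrow> (\<lambda>i. e i + f i) \<in> hom_monos n (a + b)"
  unfolding hom_monos_def by (simp add: sum.distrib)

lemma monomial_fun_add: "monomial_fun n (\<lambda>i. e i + f i) x = monomial_fun n e x * monomial_fun n f x"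
  unfolding monomial_fun_def by (simp add: power_add prod.distrib)

lemma hom_eval_monomial_fun: "hom_eval n k c x = (\<Sum>e\<in>hom_monos n k. c e * monomial_fun n e x)"
  unfolding hom_eval_def monomial_fun_def ..

lemma hom_poly_funs_zero: "(\<lambda>x. 0) \<in> hom_poly_funs n k"
proof -
  have "(\<lambda>x. 0) = hom_eval n k (\<lambda>e. 0)"
    by (simp add: hom_eval_def fun_eq_iff)
  then show ?thesis
    by (metis hom_poly_funs_def rangeI)
qed

lemma hom_poly_funs_add:
  assumes "f \<in> hom_poly_funs n k" "g \<in> hom_poly_funs n k"
  shows "(\<lambda>x. f x + g x) \<in> hom_poly_funs n k"
proof -
  obtain c d where "f = hom_eval n k c" "g = hom_eval n k d"
    using assms by (auto simp: hom_poly_funs_def)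
  then have "(\<lambda>x. f x + g x) = hom_eval n k (\<lambda>e. c e + d e)"
    by (simp add: hom_eval_def fun_eq_iff sum.distrib distrib_right)
  then show ?thesis
    by (metis hom_poly_funs_def rangeI)
qed

lemma hom_poly_funs_cmult:
  assumes "f \<in> hom_poly_funs n k"
  shows "(\<lambda>x. t * f x) \<in> hom_poly_funs n k"
proof -
  obtain c where "f = hom_eval n k c"
    using assms by (auto simp: hom_poly_funs_def)
  then have "(\<lambda>x. t * f x) = hom_eval n k (\<lambda>e. t * c e)"
    by (simp add: hom_eval_def fun_eq_iff sum_distrib_left mult.assoc)
  then show ?thesis
    by (metis hom_poly_funs_def rangeI)
qed

lemma hom_poly_funs_diff:
  "f \<in> hom_poly_funs n k \<Longrightarrow> g \<in> hom_poly_funs n k \<Longrightarrow> (\<lambda>x. f x - g x) \<in> hom_poly_funs n k"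
  using hom_poly_funs_add[of f n k "\<lambda>x. (-1) * g x"] hom_poly_funs_cmult[of g n k "-1"] by simp

lemma hom_poly_funs_monomial:
  assumes "f \<in> hom_monos n k"
  shows "(monomial_fun n f :: (nat \<Rightarrow> 'a::field) \<Rightarrow> 'a) \<in> hom_poly_funs n k"
proof -
  have "hom_eval n k (\<lambda>e. if e = f then 1 else 0) x = monomial_fun n f x" for x :: "nat \<Rightarrow> 'a"
    unfolding hom_eval_monomial_fun using assms finite_hom_monos
    by (simp add: if_distrib[of "\<lambda>c. c * _"] cong: if_cong)
  then show ?thesis
    unfolding hom_poly_funs_def by (metis rangeI ext)
qed

lemma hom_poly_funs_mult:
  assumes "f \<in> hom_poly_funs n a" "g \<in> hom_poly_funs n b"
  shows "(\<lambda>x. f x * g x) \<in> hom_poly_funs n (a + b)"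
proof -
  obtain c d where f: "f = hom_eval n a c" and g: "g = hom_eval n b d"
    using assms by (auto simp: hom_poly_funs_def)
  let ?Ma = "hom_monos n a" and ?Mb = "hom_monos n b" and ?M = "hom_monos n (a + b)"
  let ?plus = "\<lambda>ef::(nat \<Rightarrow> nat) \<times> (nat \<Rightarrow> nat). (\<lambda>i. fst ef i + snd ef i)"
  define c' where "c' h = (\<Sum>ef\<in>{ef \<in> ?Ma \<times> ?Mb. ?plus ef = h}. c (fst ef) * d (snd ef))" for h
  have "f x * g x = hom_eval n (a + b) c' x" for x
  proof -
    have "f x * g x = (\<Sum>e\<in>?Ma. \<Sum>e'\<in>?Mb. (c e * monomial_fun n e x) * (d e' * monomial_fun n e' x))"
      unfolding f g hom_eval_monomial_fun by (rule sum_product)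
    also have "\<dots> = (\<Sum>ef\<in>?Ma \<times> ?Mb. c (fst ef) * d (snd ef) * monomial_fun n (?plus ef) x)"
      by (simp add: sum.cartesian_product monomial_fun_add case_prod_beta mult_ac)
    also have "\<dots> = (\<Sum>h\<in>?M. \<Sum>ef\<in>{ef \<in> ?Ma \<times> ?Mb. ?plus ef = h}.
                        c (fst ef) * d (snd ef) * monomial_fun n (?plus ef) x)"
      by (rule sum.group[symmetric]) (auto simp: finite_hom_monos intro: hom_monos_add)
    also have "\<dots> = (\<Sum>h\<in>?M. c' h * monomial_fun n h x)"
      unfolding c'_def sum_distrib_right by (auto intro!: sum.cong)
    finally show ?thesis
      unfolding hom_eval_monomial_fun .
  qed
  then show ?thesis
    by (auto simp: hom_poly_funs_def)
qed

lemma hom_poly_funs_var: "i \<le> n \<Longrightarrow> (\<lambda>x::nat \<Rightarrow> 'a::field. x i) \<in> hom_poly_funs n 1"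
proof -
  assume "i \<le> n"
  let ?e = "\<lambda>j. if j = i then 1 else 0 :: nat"
  have "?e \<in> hom_monos n 1"
    using \<open>i \<le> n\<close> by (simp add: hom_monos_def)
  moreover have "monomial_fun n ?e = (\<lambda>x::nat \<Rightarrow> 'a. x i)"
    using \<open>i \<le> n\<close> unfolding monomial_fun_def
    by (simp add: fun_eq_iff if_distrib[of "\<lambda>e. _ ^ e"] prod.If_cases Int_absorb1 cong: if_cong)
  ultimately show ?thesis
    by (metis hom_poly_funs_monomial)
qed

lemma hom_poly_funs_const: "(\<lambda>x. t) \<in> (hom_poly_funs n 0 :: ((nat \<Rightarrow> 'a::field) \<Rightarrow> 'a) set)"
proof -
  have "(\<lambda>_. 0) \<in> hom_monos n 0"
    by (simp add: hom_monos_def)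
  moreover have "monomial_fun n (\<lambda>_. 0) = (\<lambda>x::nat \<Rightarrow> 'a. 1)"
    by (simp add: monomial_fun_def fun_eq_iff)
  ultimately show ?thesis
    using hom_poly_funs_cmult[of "\<lambda>x. 1" n 0 t] by (metis hom_poly_funs_monomial mult_1_right)
qed

lemma hom_poly_funs_prod:
  assumes "\<And>u. u < r \<Longrightarrow> L u \<in> hom_poly_funs n 1"
  shows "(\<lambda>x. \<Prod>u<r. L u x) \<in> hom_poly_funs n r"
  using assms
proof (induction r)
  case 0
  then show ?case
    using hom_poly_funs_const[of 1 n] by simp
next
  case (Suc r)
  then have "(\<lambda>x. (\<Prod>u<r. L u x) * L r x) \<in> hom_poly_funs n (r + 1)"
    by (intro hom_poly_funs_mult) auto
  then show ?case
    by simp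
qed

lemma hom_poly_funs_var_power: "i \<le> n \<Longrightarrow> (\<lambda>x::nat \<Rightarrow> 'a::field. x i ^ r) \<in> hom_poly_funs n r"
  using hom_poly_funs_prod[of r "\<lambda>u x. x i" n] hom_poly_funs_var[of i n] by simp

lemma hom_poly_funs_mono:
  assumes "m \<le> n"
  shows "hom_poly_funs m k \<subseteq> (hom_poly_funs n k :: ((nat \<Rightarrow> 'a::field) \<Rightarrow> 'a) set)"
proof
  fix f :: "(nat \<Rightarrow> 'a) \<Rightarrow> 'a"
  assume "f \<in> hom_poly_funs m k"
  then obtain c where f: "f = hom_eval m k c"
    by (auto simp: hom_poly_funs_def)
  have sub: "hom_monos m k \<subseteq> hom_monos n k"
  proof
    fix e assume e: "e \<in> hom_monos m k"
    have "(\<Sum>i\<le>n. e i) = (\<Sum>i\<le>m. e i)"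
      using e assms by (intro sum.mono_neutral_right) (auto simp: hom_monos_def)
    then show "e \<in> hom_monos n k"
      using e assms by (auto simp: hom_monos_def)
  qed
  have same_monomial: "monomial_fun n e x = monomial_fun m e x" if "e \<in> hom_monos m k"
    for e and x :: "nat \<Rightarrow> 'a"
    unfolding monomial_fun_def using that assms
    by (intro prod.mono_neutral_right) (auto simp: hom_monos_def)
  define c' where "c' e = (if e \<in> hom_monos m k then c e else 0)" for e
  have "f x = hom_eval n k c' x" for x
  proof -
    have "f x = (\<Sum>e\<in>hom_monos m k. c e * monomial_fun n e x)"
      unfolding f hom_eval_monomial_fun by (rule sum.cong) (auto simp: same_monomial)
    also have "\<dots> = hom_eval n k c' x"
      unfolding hom_eval_monomial_fun
      by (rule sum.mono_neutral_cong_left) (use sub in \<open>auto simp: finite_hom_monos c'_def\<close>)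
    finally show ?thesis .
  qed
  then show "f \<in> hom_poly_funs n k"
    by (auto simp: hom_poly_funs_def)
qed

lemma hom_poly_funs_fun_upd:
  assumes "f \<in> hom_poly_funs m k" "m < i"
  shows "f (x(i := a)) = f x"
proof -
  obtain c where "f = hom_eval m k c"
    using assms by (auto simp: hom_poly_funs_def)
  then show ?thesis
    using assms(2) by (auto simp: hom_eval_def intro!: sum.cong prod.cong)
qed

section \<open>Sums over the projective space\<close>

definition basis_point :: "nat \<Rightarrow> nat \<Rightarrow> 'a::field" where
  "basis_point j = (\<lambda>i. if i = j then 1 else 0)"

lemma proj_points_0: "proj_points 0 = {basis_point 0 :: nat \<Rightarrow> 'a::field}"
  by (auto simp: proj_points_def basis_point_def fun_eq_iff)

lemma proj_points_Suc:
  "proj_points (Suc n) =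
     insert (basis_point (Suc n)) ((\<lambda>(p, a). p(Suc n := a)) ` (proj_points n \<times> (UNIV :: 'a::field set)))"
proof (intro equalityI subsetI)
  fix P :: "nat \<Rightarrow> 'a"
  assume "P \<in> proj_points (Suc n)"
  then obtain j where j: "j \<le> Suc n" "P j = 1" "\<forall>i<j. P i = 0" and zero: "\<forall>i>Suc n. P i = 0"
    by (auto simp: proj_points_def)
  show "P \<in> insert (basis_point (Suc n)) ((\<lambda>(p, a). p(Suc n := a)) ` (proj_points n \<times> UNIV))"
  proof (cases "j = Suc n")
    case True
    then have "P = basis_point (Suc n)"
      using j zero by (auto simp: basis_point_def fun_eq_iff) (metis linorder_neqE_nat)
    then show ?thesis
      by simp
  next
    case False
    then have "P(Suc n := 0) \<in> proj_points n"
      using j zero by (auto simp: proj_points_def intro!: exI[of _ j])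
    then show ?thesis
      by (intro insertI2 image_eqI[of _ _ "(P(Suc n := 0), P (Suc n))"]) auto
  qed
next
  fix P :: "nat \<Rightarrow> 'a"
  assume "P \<in> insert (basis_point (Suc n)) ((\<lambda>(p, a). p(Suc n := a)) ` (proj_points n \<times> UNIV))"
  then show "P \<in> proj_points (Suc n)"
  proof
    assume "P = basis_point (Suc n)"
    then show ?thesis
      by (auto simp: proj_points_def basis_point_def intro!: exI[of _ "Suc n"])
  next
    assume "P \<in> (\<lambda>(p, a). p(Suc n := a)) ` (proj_points n \<times> UNIV)"
    then obtain p a j where "P = p(Suc n := a)" "j \<le> n" "p j = 1" "\<forall>i<j. p i = 0" "\<forall>i>n. p i = 0"
      by (auto simp: proj_points_def)
    then show ?thesis
      unfolding proj_points_def by (auto intro!: exI[of _ j])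
  qed
qed

lemma finite_proj_points: "finite (proj_points n :: (nat \<Rightarrow> 'a::{finite,field}) set)"
  by (rule finite_subset[OF _ finite_funs_vanishing_beyond[of "UNIV :: 'a set" n]])
     (auto simp: proj_points_def)

lemma sum_proj_points_Suc:
  fixes \<phi> :: "(nat \<Rightarrow> 'a::{finite,field}) \<Rightarrow> 'b::comm_monoid_add"
  shows "(\<Sum>P\<in>proj_points (Suc n). \<phi> P) =
           (\<Sum>p\<in>proj_points n. \<Sum>a\<in>UNIV. \<phi> (p(Suc n := a))) + \<phi> (basis_point (Suc n))"
proof -
  let ?ext = "\<lambda>(p, a). p(Suc n := a)" and ?A = "proj_points n \<times> (UNIV :: 'a set)"
  have last_0: "p (Suc n) = 0" if "p \<in> proj_points n" for p :: "nat \<Rightarrow> 'a"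
    using that by (simp add: proj_points_def)
  have inj: "inj_on ?ext ?A"
  proof (rule inj_onI)
    fix x y
    assume "x \<in> ?A" "y \<in> ?A" "?ext x = ?ext y"
    moreover obtain p a p' a' where "x = (p, a)" "y = (p', a')"
      by fastforce
    ultimately show "x = y"
      using last_0 by (auto simp: fun_eq_iff) metis+
  qed
  have "basis_point (Suc n) \<notin> ?ext ` ?A"
  proof
    assume "basis_point (Suc n) \<in> ?ext ` ?A"
    then obtain x where "x \<in> ?A" "basis_point (Suc n) = ?ext x" ..
    moreover obtain p a where "x = (p, a)"
      by fastforce
    ultimately have "p \<in> proj_points n" "basis_point (Suc n) = p(Suc n := a)"
      by auto
    moreover from this(1) obtain j where "j \<le> n" "p j = 1"
      by (auto simp: proj_points_def)
    ultimately show False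
      by (metis basis_point_def fun_upd_other le_imp_less_Suc less_irrefl zero_neq_one)
  qed
  then have "(\<Sum>P\<in>proj_points (Suc n). \<phi> P) = (\<Sum>P\<in>?ext ` ?A. \<phi> P) + \<phi> (basis_point (Suc n))"
    unfolding proj_points_Suc using finite_proj_points[of n, where 'a='a]
    by (simp add: add.commute)
  also have "(\<Sum>P\<in>?ext ` ?A. \<phi> P) = (\<Sum>x\<in>?A. \<phi> (?ext x))"
    by (rule sum.reindex[OF inj, unfolded comp_def])
  also have "\<dots> = (\<Sum>p\<in>proj_points n. \<Sum>a\<in>UNIV. \<phi> (p(Suc n := a)))"
    by (simp add: sum.cartesian_product case_prod_beta)
  finally show ?thesis .
qed

lemma card_proj_points: "card (proj_points n :: (nat \<Rightarrow> 'a::{finite,field}) set) = (\<Sum>d\<le>n. CARD('a) ^ d)"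
proof (induction n)
  case 0
  then show ?case
    by (simp add: proj_points_0)
next
  case (Suc n)
  have "card (proj_points (Suc n) :: (nat \<Rightarrow> 'a) set) = (\<Sum>P::nat \<Rightarrow> 'a\<in>proj_points (Suc n). 1)"
    by simp
  also have "\<dots> = card (proj_points n :: (nat \<Rightarrow> 'a) set) * CARD('a) + 1"
    by (subst sum_proj_points_Suc) simp
  finally show ?case
    using Suc.IH unfolding sum.atMost_Suc_shift
    by (simp add: sum_distrib_right power_Suc2 del: power_Suc sum.atMost_Suc)
qed

definition monomial_sum :: "nat \<Rightarrow> (nat \<Rightarrow> nat) \<Rightarrow> 'a::{finite,field}" where
  "monomial_sum n g = (\<Sum>P\<in>proj_points n. monomial_fun n g P)"

lemma monomial_sum_Suc:
  "(monomial_sum (Suc n) g :: 'a::{finite,field}) =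
     monomial_sum n g * power_sum (g (Suc n)) + (if \<forall>i\<le>n. g i = 0 then 1 else 0)"
proof -
  have extend: "monomial_fun (Suc n) g (p(Suc n := a)) = monomial_fun n g p * a ^ g (Suc n)"
    for p :: "nat \<Rightarrow> 'a" and a
    unfolding monomial_fun_def by simp
  have "(\<Prod>i\<le>n. (basis_point (Suc n) i :: 'a) ^ g i) = (\<Prod>i\<le>n. 0 ^ g i)"
    by (rule prod.cong) (auto simp: basis_point_def)
  also have "\<dots> = (if \<forall>i\<le>n. g i = 0 then 1 else 0)"
    by (auto simp: zero_power intro: prod_zero)
  finally have "monomial_fun (Suc n) g (basis_point (Suc n) :: nat \<Rightarrow> 'a) = (if \<forall>i\<le>n. g i = 0 then 1 else 0)"
    by (simp add: monomial_fun_def basis_point_def)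
  then show ?thesis
    unfolding monomial_sum_def sum_proj_points_Suc extend power_sum_def
    by (simp add: sum_distrib_left sum_distrib_right) (rule sum.swap)
qed

lemma monomial_sum_const:
  "\<forall>i\<le>n. g i = 0 \<Longrightarrow> (monomial_sum n g :: 'a::{finite,field}) = 1"
proof (induction n)
  case 0
  then show ?case
    by (simp add: monomial_sum_def proj_points_0 monomial_fun_def)
qed (simp add: monomial_sum_Suc)

lemma monomial_sum_eq_0:
  assumes "(CARD('a::{finite,field}) - 1) dvd (\<Sum>i\<le>n. g i)"
    and "0 < (\<Sum>i\<le>n. g i)" and "(\<Sum>i\<le>n. g i) \<le> n * (CARD('a) - 1)"
  shows "(monomial_sum n g :: 'a) = 0"
  using assms
proof (induction n)
  case 0
  then show ?case
    by simp
next
  case (Suc n)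
  let ?Q = "CARD('a) - 1" and ?m = "g (Suc n)"
  have split: "(\<Sum>i\<le>Suc n. g i) = (\<Sum>i\<le>n. g i) + ?m"
    by simp
  show ?case
  proof (cases "\<forall>i\<le>n. g i = 0")
    case True
    then have "power_sum ?m = (-1 :: 'a)"
      using Suc.prems by (intro power_sum_dvd) auto
    then show ?thesis
      using True by (simp add: monomial_sum_Suc monomial_sum_const)
  next
    case False
    then have "0 < (\<Sum>i\<le>n. g i)"
      by (metis atMost_iff finite_atMost gr0I sum_eq_0_iff)
    moreover have "monomial_sum n g = (0 :: 'a) \<or> power_sum ?m = (0 :: 'a)"
    proof (cases "?Q dvd ?m \<and> 0 < ?m")
      case True
      then have "?Q \<le> ?m"
        by (simp add: dvd_imp_le)
      then have "monomial_sum n g = (0 :: 'a)"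
        using Suc True \<open>0 < (\<Sum>i\<le>n. g i)\<close> by (simp add: dvd_add_left_iff)
      then show ?thesis ..
    next
      case False
      then show ?thesis
        by (auto intro: power_sum_not_dvd)
    qed
    ultimately show ?thesis
      using False by (auto simp: monomial_sum_Suc)
  qed
qed

lemma monomial_sum_last_var:
  assumes "\<not> (CARD('a::{finite,field}) - 1) dvd m"
  shows "(monomial_sum (Suc n) (\<lambda>i. if i = Suc n then m else 0) :: 'a) = 1"
  using assms by (simp add: monomial_sum_Suc power_sum_not_dvd)

lemma monomial_sum_full_degree:
  assumes "0 < g 0" and "\<forall>i. 1 \<le> i \<and> i \<le> n \<longrightarrow> g i = CARD('a::{finite,field}) - 1"
  shows "(monomial_sum n g :: 'a) = (-1) ^ n"
  using assms
proof (induction n)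
  case 0
  then show ?case
    by (simp add: monomial_sum_def proj_points_0 monomial_fun_def basis_point_def)
next
  case (Suc n)
  have "power_sum (g (Suc n)) = (-1 :: 'a)"
    using Suc.prems CARD_field_ge_2[where 'a='a] by (intro power_sum_dvd) auto
  moreover have "\<not> (\<forall>i\<le>n. g i = 0)"
    using Suc.prems by auto
  ultimately show ?case
    using Suc by (simp add: monomial_sum_Suc)
qed

lemma sum_proj_points_hom_poly_fun_eq_0:
  assumes "F \<in> hom_poly_funs n K" "(CARD('a::{finite,field}) - 1) dvd K" "0 < K" "K \<le> n * (CARD('a) - 1)"
  shows "(\<Sum>P\<in>proj_points n. (F P :: 'a)) = 0"
proof -
  obtain c where "F = hom_eval n K c"
    using assms(1) by (auto simp: hom_poly_funs_def)
  then have "(\<Sum>P\<in>proj_points n. F P) = (\<Sum>g\<in>hom_monos n K. c g * (monomial_sum n g :: 'a))"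
    unfolding hom_eval_monomial_fun monomial_sum_def sum_distrib_left by (simp add: sum.swap[of _ "proj_points n"])
  also have "\<dots> = 0"
    using assms by (auto simp: hom_monos_def intro!: sum.neutral monomial_sum_eq_0)
  finally show ?thesis .
qed

section \<open>Self-orthogonality and the necessary condition\<close>

definition eval_vector :: "nat \<Rightarrow> ((nat \<Rightarrow> 'a::field) \<Rightarrow> 'a) \<Rightarrow> (nat \<Rightarrow> 'a) \<Rightarrow> 'a" where
  "eval_vector n F = (\<lambda>P. if P \<in> proj_points n then F P else 0)"

lemma proj_RM_eq_image: "proj_RM n k = eval_vector n ` hom_poly_funs n k"
  unfolding proj_RM_def hom_poly_funs_def eval_vector_def image_image ..

lemma eval_vector_in_ambient: "eval_vector n F \<in> ambient n"
  unfolding ambient_def eval_vector_def by auto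

lemma dot_eval_vector: "dot n (eval_vector n F) (eval_vector n G) = (\<Sum>P\<in>proj_points n. F P * G P)"
  unfolding dot_def eval_vector_def by simp

lemma dot_eval_vector_monomial_self:
  "dot n (eval_vector n (monomial_fun n f)) (eval_vector n (monomial_fun n f)) =
     (monomial_sum n (\<lambda>i. 2 * f i) :: 'a::{finite,field})"
  unfolding dot_eval_vector monomial_sum_def mult_2 monomial_fun_add ..

lemma dot_eval_vector_proj_RM_eq_0:
  assumes "F \<in> hom_poly_funs n d" "c \<in> proj_RM n k"
    and "(CARD('a::{finite,field}) - 1) dvd (d + k)" "0 < d + k" "d + k \<le> n * (CARD('a) - 1)"
  shows "dot n (eval_vector n F) c = (0 :: 'a)"
proof -
  obtain G where G: "G \<in> hom_poly_funs n k" "c = eval_vector n G"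
    using assms(2) by (auto simp: proj_RM_eq_image)
  have "(\<lambda>x. F x * G x) \<in> hom_poly_funs n (d + k)"
    by (rule hom_poly_funs_mult[OF assms(1) G(1)])
  then show ?thesis
    unfolding G(2) dot_eval_vector using assms(3-5) by (rule sum_proj_points_hom_poly_fun_eq_0)
qed

text \<open>
  In a self-dual code, a monomial of degree \<open>k\<close> is a codeword, and so is a monomial whose degree
  complements \<open>k\<close> to a positive multiple of \<open>q - 1\<close> (it is orthogonal to the code); either way
  it is self-orthogonal.
\<close>
lemma self_dual_proj_RM_monomial_sum_eq_0:
  assumes self_dual: "(proj_RM n k :: ((nat \<Rightarrow> 'a::{finite,field}) \<Rightarrow> 'a) set) = dual_code n (proj_RM n k)"
    and f: "f \<in> hom_monos n d"
    and deg: "d = k \<or> ((CARD('a) - 1) dvd (d + k) \<and> 0 < d + k \<and> d + k \<le> n * (CARD('a) - 1))"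
  shows "(monomial_sum n (\<lambda>i. 2 * f i) :: 'a) = 0"
proof -
  let ?v = "eval_vector n (monomial_fun n f) :: (nat \<Rightarrow> 'a) \<Rightarrow> 'a"
  have "?v \<in> proj_RM n k"
  proof (cases "d = k")
    case True
    then show ?thesis
      using f by (auto simp: proj_RM_eq_image intro: hom_poly_funs_monomial)
  next
    case False
    then have "\<forall>c\<in>proj_RM n k. dot n ?v c = 0"
      using deg by (auto intro: dot_eval_vector_proj_RM_eq_0 hom_poly_funs_monomial[OF f])
    then show ?thesis
      using eval_vector_in_ambient self_dual by (auto simp: dual_code_def)
  qed
  then have "dot n ?v ?v = 0"
    using self_dual by (auto simp: dual_code_def)
  then show ?thesis
    by (simp add: dot_eval_vector_monomial_self)
qed

lemma self_dual_proj_RM_dvd_double: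
  assumes self_dual: "(proj_RM n k :: ((nat \<Rightarrow> 'a::{finite,field}) \<Rightarrow> 'a) set) = dual_code n (proj_RM n k)"
    and "1 \<le> n"
  shows "(CARD('a) - 1) dvd 2 * k"
proof (rule ccontr)
  assume not_dvd: "\<not> (CARD('a) - 1) dvd 2 * k"
  obtain n' where n': "n = Suc n'"
    using \<open>1 \<le> n\<close> by (cases n) auto
  let ?f = "\<lambda>i. if i = n then k else 0"
  have "?f \<in> hom_monos n k"
    by (simp add: hom_monos_def)
  moreover have "(\<lambda>i. 2 * ?f i) = (\<lambda>i. if i = Suc n' then 2 * k else 0)"
    by (auto simp: n')
  ultimately show False
    using self_dual_proj_RM_monomial_sum_eq_0[OF self_dual, of ?f k]
      monomial_sum_last_var[OF not_dvd, of n'] by (simp add: n')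
qed

lemma self_dual_proj_RM_not_dvd:
  assumes self_dual: "(proj_RM n k :: ((nat \<Rightarrow> 'a::{finite,field}) \<Rightarrow> 'a) set) = dual_code n (proj_RM n k)"
    and "1 \<le> k" "k \<le> n * (CARD('a) - 1)"
  shows "\<not> (CARD('a) - 1) dvd k"
proof
  assume "(CARD('a) - 1) dvd k"
  have "(\<lambda>_. 0) \<in> hom_monos n 0"
    by (simp add: hom_monos_def)
  then show False
    using self_dual_proj_RM_monomial_sum_eq_0[OF self_dual, of "\<lambda>_. 0" 0]
      monomial_sum_const[of n "\<lambda>_. 0", where 'a='a] \<open>(CARD('a) - 1) dvd k\<close> assms(2,3)
    by simp
qed

text \<open>The witness is \<open>x\<^sub>0 ^ f\<^sub>0 * (x\<^sub>1 \<cdots> x\<^sub>n) ^ h\<close>, of degree \<open>k\<close> or \<open>n (q - 1) - k\<close>.\<close>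
lemma self_dual_proj_RM_double_eq:
  assumes self_dual: "(proj_RM n k :: ((nat \<Rightarrow> 'a::{finite,field}) \<Rightarrow> 'a) set) = dual_code n (proj_RM n k)"
    and Qh: "CARD('a) - 1 = 2 * h" and "1 \<le> k"
  shows "2 * k = n * (CARD('a) - 1)"
proof (rule ccontr)
  let ?Q = "CARD('a) - 1"
  assume "2 * k \<noteq> n * ?Q"
  define f0 where "f0 = (if 2 * k > n * ?Q then k - n * h else n * h - k)"
  define f where "f i = (if i = 0 then f0 else if i \<le> n then h else 0)" for i
  have "0 < f0"
    using \<open>2 * k \<noteq> n * ?Q\<close> unfolding f0_def Qh by auto
  have "(\<Sum>i\<le>n. f i) = f0 + n * h"
    unfolding f_def by (simp add: atMost_atLeast0 sum.atLeast_Suc_atMost)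
  then have f: "f \<in> hom_monos n (f0 + n * h)"
    by (simp add: hom_monos_def f_def)
  have "f0 + n * h = k \<or> f0 + n * h + k = n * ?Q"
    unfolding f0_def Qh by auto
  then have "(monomial_sum n (\<lambda>i. 2 * f i) :: 'a) = 0"
    using \<open>1 \<le> k\<close> by (intro self_dual_proj_RM_monomial_sum_eq_0[OF self_dual f]) auto
  moreover have "(monomial_sum n (\<lambda>i. 2 * f i) :: 'a) = (-1) ^ n"
    using \<open>0 < f0\<close> Qh by (intro monomial_sum_full_degree) (auto simp: f_def)
  ultimately show False
    by simp
qed

lemma self_dual_proj_RM_imp:
  assumes self_dual: "(proj_RM n k :: ((nat \<Rightarrow> 'a::{finite,field}) \<Rightarrow> 'a) set) = dual_code n (proj_RM n k)"
    and "1 \<le> n" "1 \<le> k" "k \<le> n * (CARD('a) - 1)"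
  shows "odd CARD('a) \<and> odd n \<and> k = n * (CARD('a) - 1) div 2"
proof -
  let ?Q = "CARD('a) - 1"
  have "?Q dvd 2 * k" "\<not> ?Q dvd k"
    using self_dual_proj_RM_dvd_double self_dual_proj_RM_not_dvd assms by blast+
  then have "even ?Q"
    using coprime_dvd_mult_right_iff[of ?Q 2 k] by (auto simp: coprime_commute)
  then obtain h where Qh: "?Q = 2 * h"
    by blast
  then have "2 * k = n * ?Q"
    using self_dual_proj_RM_double_eq[OF self_dual] \<open>1 \<le> k\<close> by blast
  then have "odd n"
    using \<open>\<not> ?Q dvd k\<close> Qh by (auto elim!: evenE)
  moreover have "odd CARD('a)"
    using \<open>even ?Q\<close> CARD_field_ge_2[where 'a='a] by simp
  ultimately show ?thesis
    using \<open>2 * k = n * ?Q\<close> by simp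
qed

section \<open>Counting bounded compositions\<close>

text \<open>
  \<open>ncomp Q m t\<close> is the number of ways of writing \<open>t\<close> as an ordered sum of \<open>m\<close> parts in
  \<open>{0..Q}\<close>; \<open>ncomp_lt Q m \<theta>\<close> counts those tuples with sum below \<open>\<theta>\<close>.  Integer arguments make
  the shifts in the recursion free of truncation.
\<close>
fun ncomp :: "nat \<Rightarrow> nat \<Rightarrow> int \<Rightarrow> int" where
  "ncomp Q 0 t = (if t = 0 then 1 else 0)"
| "ncomp Q (Suc m) t = (\<Sum>a\<le>Q. ncomp Q m (t - int a))"

definition ncomp_lt :: "nat \<Rightarrow> nat \<Rightarrow> int \<Rightarrow> int" where
  "ncomp_lt Q m \<theta> = (\<Sum>t\<in>{0..<\<theta>}. ncomp Q m t)"

lemma ncomp_eq_0_outside: "t < 0 \<or> t > int (m * Q) \<Longrightarrow> ncomp Q m t = 0"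
proof (induction m arbitrary: t)
  case (Suc m)
  have "ncomp Q m (t - int a) = 0" if "a \<le> Q" for a
    using Suc.prems that by (intro Suc.IH) (auto simp: algebra_simps)
  then show ?case
    by simp
qed auto

lemma sum_ncomp_superset:
  "finite A \<Longrightarrow> {0..int (m * Q)} \<subseteq> A \<Longrightarrow> (\<Sum>t\<in>A. ncomp Q m t) = (\<Sum>t\<in>{0..int (m * Q)}. ncomp Q m t)"
  by (rule sum.mono_neutral_right) (auto intro: ncomp_eq_0_outside)

lemma sum_ncomp_window:
  "finite A \<Longrightarrow> (\<Sum>t\<in>A. ncomp Q m t) = (\<Sum>t\<in>{0..int (m * Q)}. if t \<in> A then ncomp Q m t else 0)"
  unfolding sum.inter_filter[OF finite_atLeastAtMost_int, symmetric]
  by (rule sum.mono_neutral_right) (auto intro: ncomp_eq_0_outside)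

lemma sum_ncomp_shift: "(\<Sum>t\<in>A. ncomp Q m (t - int a)) = (\<Sum>t\<in>(\<lambda>t. t - int a) ` A. ncomp Q m t)"
  by (subst sum.reindex) (auto simp: inj_on_def)

lemma sum_ncomp: "(\<Sum>t\<in>{0..int (m * Q)}. ncomp Q m t) = int (Suc Q) ^ m"
proof (induction m)
  case (Suc m)
  have "(\<Sum>t\<in>{0..int (Suc m * Q)}. ncomp Q m (t - int a)) = int (Suc Q) ^ m" if "a \<le> Q" for a
  proof -
    have "(\<Sum>t\<in>{0..int (Suc m * Q)}. ncomp Q m (t - int a)) = (\<Sum>t\<in>{- int a..int (Suc m * Q) - int a}. ncomp Q m t)"
      by (simp add: sum_ncomp_shift)
    also have "\<dots> = (\<Sum>t\<in>{0..int (m * Q)}. ncomp Q m t)"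
      using that by (intro sum_ncomp_superset) auto
    finally show ?thesis
      using Suc.IH by simp
  qed
  then have "(\<Sum>a\<le>Q. \<Sum>t\<in>{0..int (Suc m * Q)}. ncomp Q m (t - int a)) = (\<Sum>a\<le>Q. int (Suc Q) ^ m)"
    by simp
  then show ?case
    by (simp add: sum.swap[of _ "{..Q}"] del: mult_Suc)
qed simp

lemma ncomp_symmetric: "ncomp Q m t = ncomp Q m (int (m * Q) - t)"
proof (induction m arbitrary: t)
  case (Suc m)
  have "ncomp Q (Suc m) (int (Suc m * Q) - t) = (\<Sum>a\<le>Q. ncomp Q m (int (m * Q) - (t - int (Q - a))))"
    by (auto simp: algebra_simps intro!: sum.cong)
  also have "\<dots> = (\<Sum>a\<le>Q. ncomp Q m (t - int (Q - a)))"
    by (intro sum.cong refl) (rule Suc.IH[symmetric])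
  also have "\<dots> = (\<Sum>a<Suc Q. ncomp Q m (t - int (Suc Q - Suc a)))"
    by (simp add: lessThan_Suc_atMost)
  also have "\<dots> = (\<Sum>a<Suc Q. ncomp Q m (t - int a))"
    by (rule sum.nat_diff_reindex)
  finally show ?case
    by (simp add: lessThan_Suc_atMost)
qed auto

lemma ncomp_lt_window: "ncomp_lt Q m \<theta> = (\<Sum>t\<in>{0..int (m * Q)}. if t < \<theta> then ncomp Q m t else 0)"
  unfolding ncomp_lt_def by (subst sum_ncomp_window) (auto intro!: sum.cong)

lemma ncomp_lt_nonpos: "\<theta> \<le> 0 \<Longrightarrow> ncomp_lt Q m \<theta> = 0"
  unfolding ncomp_lt_def by simp

lemma ncomp_lt_0: "0 < \<theta> \<Longrightarrow> ncomp_lt Q 0 \<theta> = 1"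
  unfolding ncomp_lt_def by (simp add: sum.If_cases)

lemma ncomp_lt_add_1: "0 \<le> \<theta> \<Longrightarrow> ncomp_lt Q m (\<theta> + 1) = ncomp_lt Q m \<theta> + ncomp Q m \<theta>"
proof -
  assume "0 \<le> \<theta>"
  then have "{0..<\<theta> + 1} = insert \<theta> {0..<\<theta>}"
    by auto
  then show ?thesis
    unfolding ncomp_lt_def by simp
qed

lemma ncomp_lt_Suc: "ncomp_lt Q (Suc m) \<theta> = (\<Sum>a\<le>Q. ncomp_lt Q m (\<theta> - int a))"
proof -
  have "(\<lambda>t. t - int a) ` {0..<\<theta>} = {- int a..<\<theta> - int a}" for a
    by (auto intro: image_eqI[of _ _ "_ + int a"])
  then have shift: "(\<Sum>t\<in>{0..<\<theta>}. ncomp Q m (t - int a)) = ncomp_lt Q m (\<theta> - int a)" for a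
    unfolding sum_ncomp_shift ncomp_lt_def
    by simp (rule sum.mono_neutral_right, auto intro: ncomp_eq_0_outside)
  have "ncomp_lt Q (Suc m) \<theta> = (\<Sum>a\<le>Q. \<Sum>t\<in>{0..<\<theta>}. ncomp Q m (t - int a))"
    unfolding ncomp_lt_def by (simp add: sum.swap[of _ "{0..<\<theta>}"])
  then show ?thesis
    by (simp add: shift)
qed

text \<open>The complement of a lower count is a lower count, by the symmetry \<open>t \<mapsto> m Q - t\<close>.\<close>
lemma ncomp_lt_complement: "ncomp_lt Q m \<theta> + ncomp_lt Q m (int (m * Q) + 1 - \<theta>) = int (Suc Q) ^ m"
proof -
  let ?W = "{0..int (m * Q)}"
  have "ncomp_lt Q m (int (m * Q) + 1 - \<theta>)
      = (\<Sum>t\<in>?W. if int (m * Q) - t < int (m * Q) + 1 - \<theta> then ncomp Q m (int (m * Q) - t) else 0)"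
    unfolding ncomp_lt_window
    by (rule sum.reindex_bij_witness[of _ "\<lambda>t. int (m * Q) - t" "\<lambda>t. int (m * Q) - t"]) auto
  also have "\<dots> = (\<Sum>t\<in>?W. if \<theta> \<le> t then ncomp Q m t else 0)"
    by (intro sum.cong) (auto simp: ncomp_symmetric[of Q m "int m * int Q - t" for t])
  finally have "ncomp_lt Q m \<theta> + ncomp_lt Q m (int (m * Q) + 1 - \<theta>) = (\<Sum>t\<in>?W. ncomp Q m t)"
    unfolding ncomp_lt_window[of Q m \<theta>] by (simp flip: sum.distrib) (rule sum.cong, auto)
  then show ?thesis
    using sum_ncomp[of Q m] by simp
qed

lemma ncomp_lt_diff: "y \<le> x \<Longrightarrow> (\<Sum>t\<in>{y..<x}. ncomp Q m t) = ncomp_lt Q m x - ncomp_lt Q m y"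
  unfolding ncomp_lt_window by (simp add: sum_ncomp_window flip: sum_subtractf) (rule sum.cong, auto)

lemma ncomp_telescope:
  assumes "\<theta> + int Q > 0"
  shows "ncomp Q p (\<theta> + int Q) = (\<Sum>m<p. ncomp_lt Q m (\<theta> + int Q) - ncomp_lt Q m \<theta>)"
proof (induction p)
  case 0
  then show ?case
    using assms by simp
next
  case (Suc p)
  have "{..Q} = insert 0 {1..Q}"
    by auto
  then have "ncomp Q (Suc p) (\<theta> + int Q)
      = ncomp Q p (\<theta> + int Q) + (\<Sum>a\<in>{1..Q}. ncomp Q p (\<theta> + int Q - int a))"
    by simp
  also have "(\<Sum>a\<in>{1..Q}. ncomp Q p (\<theta> + int Q - int a)) = (\<Sum>t\<in>{\<theta>..<\<theta> + int Q}. ncomp Q p t)"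
    by (rule sum.reindex_bij_witness[of _ "\<lambda>t. nat (\<theta> + int Q - t)" "\<lambda>a. \<theta> + int Q - int a"]) auto
  also have "\<dots> = ncomp_lt Q p (\<theta> + int Q) - ncomp_lt Q p \<theta>"
    by (simp add: ncomp_lt_diff)
  finally show ?case
    using Suc.IH by simp
qed

text \<open>
  \<open>tail_balance Q h n j\<close>: among the tuples of all lengths \<open>m \<le> n\<close>, as many have sum at least
  \<open>(n - j) h\<close> as have sum below \<open>(n + j) h\<close>.  For \<open>j = 0\<close> it says that exactly half of them have
  sum below \<open>n h\<close>.
\<close>
definition tail_balance :: "nat \<Rightarrow> int \<Rightarrow> nat \<Rightarrow> int \<Rightarrow> bool" where
  "tail_balance Q h n j \<longleftrightarrow>
     (\<Sum>m\<le>n. int (Suc Q) ^ m - ncomp_lt Q m ((int n - j) * h)) = (\<Sum>m\<le>n. ncomp_lt Q m ((int n + j) * h))"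

lemma tail_balance_uminus: "tail_balance Q h n j \<longleftrightarrow> tail_balance Q h n (- j)"
  unfolding tail_balance_def by (simp add: sum_subtractf) (auto simp: algebra_simps)

lemma tail_balance_Suc:
  assumes Qh: "int Q = 2 * h" and pos: "0 < (int (Suc n) + j) * h"
    and prev: "tail_balance Q h n (j - 1)"
  shows "tail_balance Q h (Suc n) j"
proof -
  let ?N = "Suc n" and ?q = "int (Suc Q)"
  let ?lo = "(int ?N - j) * h" and ?hi = "(int ?N + j) * h" and ?hi' = "(int n + (j - 1)) * h"
  have hi: "?hi = ?hi' + int Q"
    using Qh by (simp add: algebra_simps)
  have "?q ^ ?N - ncomp_lt Q ?N ?lo = ncomp_lt Q ?N (?hi + 1)"
    using ncomp_lt_complement[of Q ?N ?lo] Qh by (simp add: algebra_simps)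
  also have "\<dots> = ncomp_lt Q ?N ?hi + ncomp Q ?N ?hi"
    using pos by (intro ncomp_lt_add_1) simp
  also have "ncomp Q ?N ?hi = (\<Sum>m<?N. ncomp_lt Q m ?hi - ncomp_lt Q m ?hi')"
    unfolding hi by (rule ncomp_telescope) (use pos hi in simp)
  finally have top: "?q ^ ?N - ncomp_lt Q ?N ?lo
      = ncomp_lt Q ?N ?hi + (\<Sum>m<?N. ncomp_lt Q m ?hi - ncomp_lt Q m ?hi')" .
  have "(\<Sum>m\<le>n. ?q ^ m - ncomp_lt Q m ?lo) = (\<Sum>m\<le>n. ncomp_lt Q m ?hi')"
    using prev unfolding tail_balance_def by (simp add: algebra_simps)
  then have "(\<Sum>m\<le>?N. ?q ^ m - ncomp_lt Q m ?lo)
      = (\<Sum>m\<le>n. ncomp_lt Q m ?hi') + ncomp_lt Q ?N ?hi + (\<Sum>m<?N. ncomp_lt Q m ?hi - ncomp_lt Q m ?hi')"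
    using top by simp
  also have "\<dots> = (\<Sum>m\<le>?N. ncomp_lt Q m ?hi)"
    by (simp add: sum_subtractf lessThan_Suc_atMost)
  finally show ?thesis
    unfolding tail_balance_def .
qed

lemma tail_balance_parity:
  assumes Qh: "int Q = 2 * h" and h1: "h \<ge> 1"
  shows "tail_balance Q h n (if even n then 1 else 0)"
proof (induction n)
  case 0
  then show ?case
    unfolding tail_balance_def using h1 by (simp add: ncomp_lt_nonpos ncomp_lt_0)
next
  case (Suc n)
  show ?case
  proof (cases "even n")
    case True
    then have "tail_balance Q h n (0 - 1)"
      using Suc.IH tail_balance_uminus by simp
    then have "tail_balance Q h (Suc n) 0"
      using h1 by (intro tail_balance_Suc[OF Qh]) auto
    then show ?thesis
      using True by simp
  next
    case False
    then have "tail_balance Q h n (1 - 1)"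
      using Suc.IH by simp
    then have "tail_balance Q h (Suc n) 1"
      using h1 by (intro tail_balance_Suc[OF Qh]) auto
    then show ?thesis
      using False by simp
  qed
qed

lemma sum_ncomp_lt_half:
  assumes "Q = 2 * h" "0 < h" "odd n"
  shows "2 * (\<Sum>m\<le>n. ncomp_lt Q m (int (n * h))) = (\<Sum>m\<le>n. int (Suc Q) ^ m)"
proof -
  have "tail_balance Q (int h) n 0"
    using tail_balance_parity[of Q "int h" n] assms by simp
  then show ?thesis
    unfolding tail_balance_def by (simp add: sum_subtractf)
qed

section \<open>A set of half the points on which the code interpolates\<close>

text \<open>
  \<open>chart_grid \<alpha> Q j d r\<close> consists of the points with leading \<open>1\<close> in coordinate \<open>j\<close> whose
  coordinates \<open>j + 1, \<dots>, j + d\<close> are \<open>\<alpha> s\<^sub>1, \<dots>, \<alpha> s\<^sub>d\<close> with all \<open>s\<^sub>i \<le> Q\<close> and \<open>s\<^sub>1 + \<dots> + s\<^sub>d \<le> r\<close>.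
\<close>
primrec chart_grid :: "(nat \<Rightarrow> 'a::field) \<Rightarrow> nat \<Rightarrow> nat \<Rightarrow> nat \<Rightarrow> nat \<Rightarrow> (nat \<Rightarrow> 'a) set" where
  "chart_grid \<alpha> Q j 0 r = {basis_point j}"
| "chart_grid \<alpha> Q j (Suc d) r =
     (\<Union>s\<le>min r Q. (\<lambda>p. p(j + Suc d := \<alpha> s)) ` chart_grid \<alpha> Q j d (r - s))"

lemma chart_grid_shape:
  "p \<in> chart_grid \<alpha> Q j d r \<Longrightarrow> p j = 1 \<and> (\<forall>i<j. p i = 0) \<and> (\<forall>i>j + d. p i = 0)"
proof (induction d arbitrary: r p)
  case 0
  then show ?case
    by (auto simp: basis_point_def)
next
  case (Suc d)
  then obtain s p' where "p' \<in> chart_grid \<alpha> Q j d (r - s)" "p = p'(j + Suc d := \<alpha> s)"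
    by auto
  with Suc.IH show ?case
    by auto
qed

lemma finite_chart_grid: "finite (chart_grid \<alpha> Q j d r)"
  by (induction d arbitrary: r) auto

lemma card_chart_grid:
  assumes "inj_on \<alpha> {..Q}"
  shows "int (card (chart_grid \<alpha> Q j d r)) = ncomp_lt Q d (int r + 1)"
proof (induction d arbitrary: r)
  case 0
  then show ?case
    by (simp add: ncomp_lt_0)
next
  case (Suc d)
  let ?m = "j + Suc d"
  let ?layer = "\<lambda>s. (\<lambda>p. p(?m := \<alpha> s)) ` chart_grid \<alpha> Q j d (r - s)"
  have inj_upd: "inj_on (\<lambda>p. p(?m := \<alpha> s)) (chart_grid \<alpha> Q j d (r - s))" for s
  proof (rule inj_onI)
    fix p p'
    assume "p \<in> chart_grid \<alpha> Q j d (r - s)" "p' \<in> chart_grid \<alpha> Q j d (r - s)"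
      and "p(?m := \<alpha> s) = p'(?m := \<alpha> s)"
    moreover from calculation(1,2) have "p ?m = 0" "p' ?m = 0"
      by (auto dest: chart_grid_shape)
    ultimately show "p = p'"
      by (metis fun_upd_triv fun_upd_upd)
  qed
  have "?layer s \<inter> ?layer s' = {}" if "s \<le> Q" "s' \<le> Q" "s \<noteq> s'" for s s'
    using inj_onD[OF assms, of s s'] that by (auto simp: fun_eq_iff) metis
  then have "card (chart_grid \<alpha> Q j (Suc d) r) = (\<Sum>s\<le>min r Q. card (?layer s))"
    unfolding chart_grid.simps by (intro card_UN_disjoint) (auto simp: finite_chart_grid)
  also have "\<dots> = (\<Sum>s\<le>min r Q. card (chart_grid \<alpha> Q j d (r - s)))"
    by (intro sum.cong refl card_image inj_upd)
  finally have "int (card (chart_grid \<alpha> Q j (Suc d) r)) = (\<Sum>s\<le>min r Q. ncomp_lt Q d (int r + 1 - int s))"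
    using Suc.IH by (simp add: algebra_simps)
  also have "\<dots> = (\<Sum>s\<le>Q. ncomp_lt Q d (int r + 1 - int s))"
    by (rule sum.mono_neutral_left) (auto intro!: ncomp_lt_nonpos)
  finally show ?case
    by (simp add: ncomp_lt_Suc)
qed

text \<open>
  Newton interpolation along the last coordinate \<open>m = j + d + 1\<close>: having interpolated on the
  layers \<open>x\<^sub>m = \<alpha> s\<close> for \<open>s < R\<close>, correct on layer \<open>R\<close> by a multiple of
  \<open>\<Prod>\<^sub>u\<^sub><\<^sub>R (x\<^sub>m - \<alpha> u x\<^sub>j)\<close>, which vanishes on the earlier layers and is a nonzero constant on layer
  \<open>R\<close>, since \<open>x\<^sub>j = 1\<close> on the grid.
\<close>
lemma chart_grid_layers_interpolation:
  fixes \<alpha> :: "nat \<Rightarrow> 'a::field"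
  assumes inj: "inj_on \<alpha> {..Q}"
    and interp: "\<And>r t. \<exists>g\<in>hom_poly_funs (j + d) r. \<forall>p\<in>chart_grid \<alpha> Q j d r. g p = t p"
    and "R \<le> Suc (min r Q)"
  shows "\<exists>G\<in>hom_poly_funs (j + Suc d) r. \<forall>s<R. \<forall>p\<in>chart_grid \<alpha> Q j d (r - s).
           G (p(j + Suc d := \<alpha> s)) = t (p(j + Suc d := \<alpha> s))"
  using \<open>R \<le> Suc (min r Q)\<close>
proof (induction R)
  case 0
  then show ?case
    using hom_poly_funs_zero by blast
next
  case (Suc R)
  let ?m = "j + Suc d"
  have "R \<le> r" "R \<le> Q"
    using Suc.prems by auto
  obtain G where G: "G \<in> hom_poly_funs ?m r"
    and G_eq: "\<forall>s<R. \<forall>p\<in>chart_grid \<alpha> Q j d (r - s). G (p(?m := \<alpha> s)) = t (p(?m := \<alpha> s))"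
    using Suc.IH[OF Suc_leD[OF Suc.prems]] by blast
  define M where "M x = (\<Prod>u<R. x ?m - \<alpha> u * x j)" for x :: "nat \<Rightarrow> 'a"
  define c where "c = (\<Prod>u<R. \<alpha> R - \<alpha> u)"
  have "c \<noteq> 0"
    using inj \<open>R \<le> Q\<close> by (auto simp: c_def dest: inj_onD)
  have M_layer: "M (p(?m := \<alpha> s)) = (\<Prod>u<R. \<alpha> s - \<alpha> u)" if "p \<in> chart_grid \<alpha> Q j d r'" for p s r'
    using chart_grid_shape[OF that] by (simp add: M_def)
  obtain g where g: "g \<in> hom_poly_funs (j + d) (r - R)"
    and g_eq: "\<forall>p\<in>chart_grid \<alpha> Q j d (r - R). g p = (t (p(?m := \<alpha> R)) - G (p(?m := \<alpha> R))) / c"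
    using interp[of "r - R" "\<lambda>p. (t (p(?m := \<alpha> R)) - G (p(?m := \<alpha> R))) / c"] by blast
  define G' where "G' x = G x + M x * g x" for x
  have "M \<in> hom_poly_funs ?m R"
    unfolding M_def
    by (rule hom_poly_funs_prod) (intro hom_poly_funs_diff hom_poly_funs_cmult hom_poly_funs_var, auto)
  moreover have "g \<in> hom_poly_funs ?m (r - R)"
    using hom_poly_funs_mono[of "j + d" ?m] g by auto
  ultimately have "(\<lambda>x. M x * g x) \<in> hom_poly_funs ?m (R + (r - R))"
    by (rule hom_poly_funs_mult)
  then have "G' \<in> hom_poly_funs ?m r"
    using G \<open>R \<le> r\<close> unfolding G'_def by (intro hom_poly_funs_add) auto
  moreover have "G' (p(?m := \<alpha> s)) = t (p(?m := \<alpha> s))"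
    if "s < Suc R" "p \<in> chart_grid \<alpha> Q j d (r - s)" for s p
  proof (cases "s < R")
    case True
    then have "M (p(?m := \<alpha> s)) = 0"
      using M_layer[OF that(2)] by (auto intro: prod_zero)
    then show ?thesis
      using G_eq True that(2) by (simp add: G'_def)
  next
    case False
    then have "s = R"
      using that(1) by simp
    have "g (p(?m := \<alpha> s)) = g p"
      by (rule hom_poly_funs_fun_upd[OF g]) simp
    then show ?thesis
      using g_eq that(2) \<open>s = R\<close> M_layer[OF that(2)] \<open>c \<noteq> 0\<close> by (simp add: G'_def c_def)
  qed
  ultimately show ?case
    by blast
qed

lemma chart_grid_interpolation:
  fixes \<alpha> :: "nat \<Rightarrow> 'a::field"
  assumes "inj_on \<alpha> {..Q}"
  shows "\<exists>G\<in>hom_poly_funs (j + d) r. \<forall>p\<in>chart_grid \<alpha> Q j d r. G p = t p"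
proof (induction d arbitrary: r t)
  case 0
  have "(\<lambda>x. t (basis_point j) * x j ^ r) \<in> hom_poly_funs (j + 0) r"
    by (intro hom_poly_funs_cmult hom_poly_funs_var_power) simp
  then show ?case
    by (intro bexI[of _ "\<lambda>x. t (basis_point j) * x j ^ r"]) (auto simp: basis_point_def)
next
  case (Suc d)
  obtain G where "G \<in> hom_poly_funs (j + Suc d) r" and G_eq: "\<forall>s<Suc (min r Q).
      \<forall>p\<in>chart_grid \<alpha> Q j d (r - s). G (p(j + Suc d := \<alpha> s)) = t (p(j + Suc d := \<alpha> s))"
    using chart_grid_layers_interpolation[OF assms Suc.IH, of "Suc (min r Q)" r t] by blast
  moreover have "\<forall>p\<in>chart_grid \<alpha> Q j (Suc d) r. G p = t p"
    using G_eq by (auto simp: less_Suc_eq_le)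
  ultimately show ?case
    by blast
qed

definition interpolation_set :: "(nat \<Rightarrow> 'a::field) \<Rightarrow> nat \<Rightarrow> nat \<Rightarrow> nat \<Rightarrow> (nat \<Rightarrow> 'a) set" where
  "interpolation_set \<alpha> Q n r = (\<Union>j\<le>n. chart_grid \<alpha> Q j (n - j) r)"

lemma interpolation_set_subset: "interpolation_set \<alpha> Q n r \<subseteq> proj_points n"
  unfolding interpolation_set_def proj_points_def by (fastforce dest: chart_grid_shape)

lemma card_interpolation_set:
  assumes "inj_on \<alpha> {..Q}"
  shows "int (card (interpolation_set \<alpha> Q n r)) = (\<Sum>d\<le>n. ncomp_lt Q d (int r + 1))"
proof -
  have "chart_grid \<alpha> Q j (n - j) r \<inter> chart_grid \<alpha> Q j' (n - j') r = {}" if "j < j'" for j j'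
    using that by (fastforce dest: chart_grid_shape)
  then have "chart_grid \<alpha> Q j (n - j) r \<inter> chart_grid \<alpha> Q j' (n - j') r = {}" if "j \<noteq> j'" for j j'
    using that by (metis Int_commute linorder_neqE_nat)
  then have "card (interpolation_set \<alpha> Q n r) = (\<Sum>j\<le>n. card (chart_grid \<alpha> Q j (n - j) r))"
    unfolding interpolation_set_def by (intro card_UN_disjoint) (auto simp: finite_chart_grid)
  then have "int (card (interpolation_set \<alpha> Q n r)) = (\<Sum>j<Suc n. ncomp_lt Q (Suc n - Suc j) (int r + 1))"
    by (simp add: card_chart_grid[OF assms] lessThan_Suc_atMost)
  also have "\<dots> = (\<Sum>d<Suc n. ncomp_lt Q d (int r + 1))"
    by (rule sum.nat_diff_reindex)
  finally show ?thesis
    by (simp add: lessThan_Suc_atMost)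
qed

text \<open>
  Working down from the last chart: \<open>x\<^sub>j\<close> vanishes on the charts \<open>j' > j\<close> and is \<open>1\<close> on chart \<open>j\<close>,
  so adding \<open>x\<^sub>j\<close> times an interpolant on chart \<open>j\<close> keeps the values already fixed.
\<close>
lemma interpolation_on_charts_from:
  fixes \<alpha> :: "nat \<Rightarrow> 'a::field"
  assumes inj: "inj_on \<alpha> {..Q}" and "j \<le> Suc n"
  shows "\<exists>F\<in>hom_poly_funs n (Suc r). \<forall>p\<in>(\<Union>j'\<in>{j..n}. chart_grid \<alpha> Q j' (n - j') r). F p = t p"
  using \<open>j \<le> Suc n\<close>
proof (induction j arbitrary: t rule: inc_induct)
  case base
  then show ?case
    using hom_poly_funs_zero by auto
next
  case (step j)
  obtain H where H: "H \<in> hom_poly_funs n (Suc r)"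
    and H_eq: "\<forall>p\<in>(\<Union>j'\<in>{Suc j..n}. chart_grid \<alpha> Q j' (n - j') r). H p = t p"
    using step.IH by blast
  obtain G where G: "G \<in> hom_poly_funs (j + (n - j)) r"
    and G_eq: "\<forall>p\<in>chart_grid \<alpha> Q j (n - j) r. G p = t p - H p"
    using chart_grid_interpolation[OF inj, where j=j and d="n - j" and r=r and t="\<lambda>p. t p - H p"]
    by blast
  define F where "F x = x j * G x + H x" for x
  have "(\<lambda>x. x j * G x) \<in> hom_poly_funs n (1 + r)"
    using step.hyps G by (intro hom_poly_funs_mult hom_poly_funs_var) auto
  then have "F \<in> hom_poly_funs n (Suc r)"
    unfolding F_def using H by (intro hom_poly_funs_add) auto
  moreover have "F p = t p" if "j' \<in> {j..n}" "p \<in> chart_grid \<alpha> Q j' (n - j') r" for j' p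
  proof (cases "j' = j")
    case True
    then show ?thesis
      using G_eq that chart_grid_shape[OF that(2)] by (simp add: F_def)
  next
    case False
    then have "p j = 0"
      using that chart_grid_shape[OF that(2)] by auto
    then show ?thesis
      using H_eq that False by (auto simp: F_def)
  qed
  ultimately show ?case
    by blast
qed

lemma interpolation_set_interpolation:
  fixes \<alpha> :: "nat \<Rightarrow> 'a::field"
  assumes "inj_on \<alpha> {..Q}"
  shows "\<exists>F\<in>hom_poly_funs n (Suc r). \<forall>p\<in>interpolation_set \<alpha> Q n r. F p = t p"
  using interpolation_on_charts_from[OF assms, of 0 n r t]
  by (simp add: interpolation_set_def atLeast0AtMost)

section \<open>Self-duality by counting\<close>

lemma finite_ambient: "finite (ambient n :: ((nat \<Rightarrow> 'a::{finite,field}) \<Rightarrow> 'a) set)"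
proof (rule finite_imageD)
  let ?P = "proj_points n :: (nat \<Rightarrow> 'a) set"
  show "finite ((\<lambda>v. restrict v ?P) ` ambient n)"
    by (rule finite_subset[OF _ finite_PiE[of ?P "\<lambda>_. UNIV"]]) (auto simp: finite_proj_points)
  show "inj_on (\<lambda>v. restrict v ?P) (ambient n)"
  proof (rule inj_onI, rule ext)
    fix v w P
    assume "v \<in> ambient n" "w \<in> ambient n" "restrict v ?P = restrict w ?P"
    then show "v P = w P"
      by (cases "P \<in> ?P") (auto simp: ambient_def dest: fun_cong[where x=P])
  qed
qed

lemma power_card_le_card_if_restrict_surj:
  fixes C :: "('b \<Rightarrow> 'a::finite) set"
  assumes "finite C" "finite S" and interp: "\<And>t. \<exists>c\<in>C. \<forall>p\<in>S. c p = t p"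
  shows "CARD('a) ^ card S \<le> card C"
proof -
  have "PiE S (\<lambda>_. UNIV) \<subseteq> (\<lambda>v. restrict v S) ` C"
  proof
    fix t :: "'b \<Rightarrow> 'a"
    assume t: "t \<in> PiE S (\<lambda>_. UNIV)"
    obtain c where "c \<in> C" "\<forall>p\<in>S. c p = t p"
      using interp by blast
    moreover from this(2) have "restrict c S = t"
      using t by (auto simp: restrict_def PiE_def extensional_def fun_eq_iff)
    ultimately show "t \<in> (\<lambda>v. restrict v S) ` C"
      by blast
  qed
  then have "card (PiE S (\<lambda>_. UNIV :: 'a set)) \<le> card C"
    using assms(1) by (meson card_image_le card_mono finite_imageI order_trans)
  then show ?thesis
    using assms(2) by (simp add: card_PiE)
qed

text \<open>
  Pairing with a codeword that restricts to the indicator of \<open>P\<close> on \<open>S\<close> reads off the coordinate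
  at \<open>P\<close>.
\<close>
lemma dual_code_eq_if_eq_outside:
  fixes v w :: "(nat \<Rightarrow> 'a::{finite,field}) \<Rightarrow> 'a"
  assumes "v \<in> dual_code n C" "w \<in> dual_code n C"
    and S: "S \<subseteq> proj_points n" and interp: "\<And>t. \<exists>c\<in>C. \<forall>p\<in>S. c p = t p"
    and eq: "\<forall>P\<in>proj_points n - S. v P = w P"
  shows "v = w"
proof
  fix P
  show "v P = w P"
  proof (cases "P \<in> S")
    case True
    obtain c where "c \<in> C" and c: "\<forall>p\<in>S. c p = (if p = P then 1 else 0)"
      using interp[of "\<lambda>p. if p = P then 1 else 0"] by blast
    then have "0 = dot n v c - dot n w c"
      using assms(1,2) by (simp add: dual_code_def)
    also have "\<dots> = (\<Sum>p\<in>proj_points n. (v p - w p) * c p)"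
      by (simp add: dot_def sum_subtractf algebra_simps)
    also have "\<dots> = (\<Sum>p\<in>proj_points n. if p = P then v p - w p else 0)"
      using eq c by (intro sum.cong) auto
    also have "\<dots> = v P - w P"
      using subsetD[OF S True] by (simp add: finite_proj_points)
    finally show ?thesis
      by simp
  next
    case False
    then show ?thesis
      using eq assms(1,2) by (cases "P \<in> proj_points n") (auto simp: dual_code_def ambient_def)
  qed
qed

lemma card_dual_code_le:
  fixes C :: "((nat \<Rightarrow> 'a::{finite,field}) \<Rightarrow> 'a) set"
  assumes S: "S \<subseteq> proj_points n" and interp: "\<And>t. \<exists>c\<in>C. \<forall>p\<in>S. c p = t p"
  shows "card (dual_code n C) \<le> CARD('a) ^ card (proj_points n - S)"
proof -
  let ?R = "proj_points n - S"
  have "inj_on (\<lambda>v. restrict v ?R) (dual_code n C)"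
  proof (rule inj_onI)
    fix v w
    assume "v \<in> dual_code n C" "w \<in> dual_code n C" "restrict v ?R = restrict w ?R"
    then show "v = w"
      using dual_code_eq_if_eq_outside[OF _ _ S interp] by (metis restrict_apply')
  qed
  moreover have "(\<lambda>v. restrict v ?R) ` dual_code n C \<subseteq> PiE ?R (\<lambda>_. UNIV)"
    by (intro image_subsetI) (subst restrict_PiE_iff, simp)
  ultimately have "card (dual_code n C) \<le> card (PiE ?R (\<lambda>_. UNIV :: 'a set))"
    by (intro card_inj_on_le) (auto intro!: finite_PiE simp: finite_proj_points)
  then show ?thesis
    by (simp add: card_PiE finite_proj_points)
qed

lemma self_dual_if_interpolating_half:
  fixes C :: "((nat \<Rightarrow> 'a::{finite,field}) \<Rightarrow> 'a) set"
  assumes sub: "C \<subseteq> dual_code n C"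
    and S: "S \<subseteq> proj_points n" and interp: "\<And>t. \<exists>c\<in>C. \<forall>p\<in>S. c p = t p"
    and half: "2 * card S = card (proj_points n :: (nat \<Rightarrow> 'a) set)"
  shows "C = dual_code n C"
proof -
  have fin_dual: "finite (dual_code n C)"
    by (rule finite_subset[OF _ finite_ambient]) (auto simp: dual_code_def)
  have "finite S"
    using S finite_proj_points by (rule finite_subset)
  then have "card (proj_points n - S) = card S"
    using card_Diff_subset[OF _ S] half by simp
  then have "card (dual_code n C) \<le> card C"
    using card_dual_code_le[OF S interp]
      power_card_le_card_if_restrict_surj[OF finite_subset[OF sub fin_dual] \<open>finite S\<close> interp]
    by simp
  then show ?thesis
    using card_subset_eq[OF fin_dual sub] card_mono[OF fin_dual sub] by simp
qed

lemma proj_RM_self_orthogonal: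
  assumes "2 * k = n * (CARD('a) - 1)" "0 < k"
  shows "(proj_RM n k :: ((nat \<Rightarrow> 'a::{finite,field}) \<Rightarrow> 'a) set) \<subseteq> dual_code n (proj_RM n k)"
proof
  fix v :: "(nat \<Rightarrow> 'a) \<Rightarrow> 'a"
  assume "v \<in> proj_RM n k"
  then obtain F where F: "F \<in> hom_poly_funs n k" "v = eval_vector n F"
    by (auto simp: proj_RM_eq_image)
  have "k + k = n * (CARD('a) - 1)" "0 < n"
    using assms by (simp, cases "n = 0") auto
  then have "dot n v c = 0" if "c \<in> proj_RM n k" for c
    unfolding F(2) using assms(2) CARD_field_ge_2[where 'a='a]
    by (intro dot_eval_vector_proj_RM_eq_0[OF F(1) that]) simp_all
  then show "v \<in> dual_code n (proj_RM n k)"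
    using F eval_vector_in_ambient by (auto simp: dual_code_def)
qed

lemma proj_RM_interpolates:
  fixes \<alpha> :: "nat \<Rightarrow> 'a::field"
  assumes "inj_on \<alpha> {..Q}" "0 < k"
  shows "\<exists>c\<in>proj_RM n k. \<forall>p\<in>interpolation_set \<alpha> Q n (k - 1). c p = t p"
proof -
  obtain F where "F \<in> hom_poly_funs n k" "\<forall>p\<in>interpolation_set \<alpha> Q n (k - 1). F p = t p"
    using interpolation_set_interpolation[OF assms(1), of n "k - 1" t] \<open>0 < k\<close> by auto
  then show ?thesis
    using interpolation_set_subset[of \<alpha> Q n "k - 1"]
    by (intro bexI[of _ "eval_vector n F"]) (auto simp: eval_vector_def proj_RM_eq_image)
qed

lemma card_interpolation_set_half:
  fixes \<alpha> :: "nat \<Rightarrow> 'a::{finite,field}"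
  assumes "inj_on \<alpha> {..CARD('a) - 1}" "CARD('a) - 1 = 2 * h" "0 < h" "odd n"
  shows "2 * card (interpolation_set \<alpha> (CARD('a) - 1) n (n * h - 1)) = card (proj_points n :: (nat \<Rightarrow> 'a) set)"
proof -
  have "0 < n * h"
    using assms(3,4) by (simp add: odd_pos)
  then have "2 * int (card (interpolation_set \<alpha> (CARD('a) - 1) n (n * h - 1)))
      = (\<Sum>m\<le>n. int (Suc (CARD('a) - 1)) ^ m)"
    using card_interpolation_set[OF assms(1)] sum_ncomp_lt_half[OF assms(2-4)] by simp
  also have "\<dots> = int (card (proj_points n :: (nat \<Rightarrow> 'a) set))"
    using CARD_field_ge_2[where 'a='a] by (simp add: card_proj_points)
  finally show ?thesis
    by linarith
qed

lemma proj_RM_self_dual: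
  assumes "odd CARD('a)" "odd n" "k = n * (CARD('a) - 1) div 2"
  shows "(proj_RM n k :: ((nat \<Rightarrow> 'a::{finite,field}) \<Rightarrow> 'a) set) = dual_code n (proj_RM n k)"
proof -
  let ?Q = "CARD('a) - 1"
  have "even ?Q"
    using assms(1) CARD_field_ge_2[where 'a='a] by simp
  then obtain h where Qh: "?Q = 2 * h"
    by (rule evenE)
  then have "0 < h"
    using CARD_field_ge_2[where 'a='a] by simp
  have k: "k = n * h" "0 < k"
    using assms(2,3) Qh \<open>0 < h\<close> by (simp_all add: odd_pos)
  obtain \<alpha> :: "nat \<Rightarrow> 'a" where "bij_betw \<alpha> {..<CARD('a)} UNIV"
    using ex_bij_betw_nat_finite[of "UNIV :: 'a set"] by (auto simp: atLeast0LessThan)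
  then have inj: "inj_on \<alpha> {..?Q}"
    using CARD_field_ge_2[where 'a='a] by (auto simp: bij_betw_def intro: inj_on_subset)
  have "(proj_RM n k :: ((nat \<Rightarrow> 'a) \<Rightarrow> 'a) set) \<subseteq> dual_code n (proj_RM n k)"
    using k Qh by (intro proj_RM_self_orthogonal) simp_all
  then show ?thesis
    using k card_interpolation_set_half[OF inj Qh \<open>0 < h\<close> assms(2)]
    by (intro self_dual_if_interpolating_half[OF _ interpolation_set_subset proj_RM_interpolates[OF inj]])
      simp_all
qed

theorem mainTheorem4:
  fixes n k :: nat
    and C :: "((nat \<Rightarrow> 'a::{finite,field}) \<Rightarrow> 'a) set"
  assumes "C = proj_RM n k"
    and "n \<ge> 1" and "1 \<le> k" and "k \<le> n * (card (UNIV :: 'a set) - 1)"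
  shows "C = dual_code n C
     \<longleftrightarrow> odd (card (UNIV :: 'a set)) \<and> odd n \<and> k = n * (card (UNIV :: 'a set) - 1) div 2"
  unfolding assms(1) using self_dual_proj_RM_imp[OF _ assms(2-4)] proj_RM_self_dual[of n k] by blast

end
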